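(* Let $U\in \mathbb{C}^{m\times p}$ and $V\in \mathbb{C}^{q\times m}$ be arbitrary matrices, and let $E=U(VU)^{\dagger}V$. Then $E$ is idempotent, and its range and null space are given by \[ R(E)=R(UU^{*}V^{*})=R(UU^{*}V^{*}V)=R(U)\cap \big((UU^{*})^{\dagger}(R(U)\cap N(V))\big)^{\perp}, \] \[ N(E)=N(U^{*}V^{*}V)=N(UU^{*}V^{*}V)=N(V)\oplus (V^{*}V)^{\dagger}\big(R(U)+N(V)\big)^{\perp}. \]
   Context: $A^{*}$ denotes the conjugate transpose of $A$; $A^{\dagger}$ denotes the Moore–Penrose inverse of $A$ (the unique $X$ with $AXA=A$, $XAX=X$, $(AX)^*=AX$, $(XA)^*=XA$). $R(A)$ and $N(A)$ are the range and null space of $A$. For a subspace $S\subseteq\mathbb{C}^m$, $S^{\perp}$ is its orthogonal complement with respect to the standard inner product, and for a matrix $B$, $BS=\{Bs:s\in S\}$. $\oplus$ denotes a direct sum of subspaces. *)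

theory Defs
  imports "HOL-Analysis.Analysis"
begin

text \<open>Complex matrices: an m x p matrix is complex ^ 'p ^ 'm (rows indexed by 'm).\<close>

definition ctrans :: "complex ^ 'n ^ 'm \<Rightarrow> complex ^ 'm ^ 'n" where
  "ctrans A = (\<chi> i j. cnj (A $ j $ i))"

definition is_mp_inverse :: "complex ^ 'n ^ 'm \<Rightarrow> complex ^ 'm ^ 'n \<Rightarrow> bool" where
  "is_mp_inverse A X \<longleftrightarrow>
     A ** X ** A = A \<and> X ** A ** X = X \<and>
     ctrans (A ** X) = A ** X \<and> ctrans (X ** A) = X ** A"

definition mp_inv :: "complex ^ 'n ^ 'm \<Rightarrow> complex ^ 'm ^ 'n" where
  "mp_inv A = (THE X. is_mp_inverse A X)"

definition col_space :: "complex ^ 'n ^ 'm \<Rightarrow> (complex ^ 'm) set" where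
  "col_space A = range (\<lambda>x. A *v x)"

definition null_space :: "complex ^ 'n ^ 'm \<Rightarrow> (complex ^ 'n) set" where
  "null_space A = {x. A *v x = 0}"

definition cinner :: "complex ^ 'n \<Rightarrow> complex ^ 'n \<Rightarrow> complex" where
  "cinner x y = (\<Sum>i\<in>UNIV. x $ i * cnj (y $ i))"

definition cperp :: "(complex ^ 'n) set \<Rightarrow> (complex ^ 'n) set" where
  "cperp S = {x. \<forall>s\<in>S. cinner x s = 0}"

definition subspace_sum :: "(complex ^ 'n) set \<Rightarrow> (complex ^ 'n) set \<Rightarrow> (complex ^ 'n) set" where
  "subspace_sum A B = {a + b | a b. a \<in> A \<and> b \<in> B}"

definition is_direct_sum :: "(complex ^ 'n) set \<Rightarrow> (complex ^ 'n) set \<Rightarrow> (complex ^ 'n) set \<Rightarrow> bool" where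
  "is_direct_sum C A B \<longleftrightarrow> C = subspace_sum A B \<and> A \<inter> B = {0}"

end

theory Submission imports Defs begin

text \<open>
  Write \<open>W = VU\<close>. The Penrose equations give the factorisations
  \<open>W\<^sup>\<dagger> = W\<^sup>* W\<^sup>\<dagger>\<^sup>* W\<^sup>\<dagger> = W\<^sup>\<dagger> W\<^sup>\<dagger>\<^sup>* W\<^sup>*\<close> and
  \<open>W\<^sup>* = W\<^sup>\<dagger> W W\<^sup>* = W\<^sup>* W W\<^sup>\<dagger>\<close>. Hence \<open>E = U W\<^sup>\<dagger> V\<close> and
  \<open>U W\<^sup>* = U U\<^sup>* V\<^sup>*\<close> are right multiples of each other (equal ranges), and \<open>E\<close>
  and \<open>W\<^sup>* V = U\<^sup>* V\<^sup>* V\<close> are left multiples of each other (equal null spaces).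
  Inserting or removing a factor \<open>A\<^sup>* A\<close> changes neither ranges nor null spaces, since
  \<open>A\<^sup>* A x = 0\<close> forces \<open>\<parallel>A x\<parallel>\<^sup>2 = 0\<close>. The orthogonal descriptions follow from
  \<open>R(B) = N(B\<^sup>*)\<^sup>\<perp>\<close>: a vector of \<open>R(U)\<close> orthogonal to
  \<open>(UU\<^sup>*)\<^sup>\<dagger>(R(U) \<inter> N(V))\<close> is orthogonal to \<open>N(VUU\<^sup>*)\<close>; and a vector
  \<open>x\<close> with \<open>U\<^sup>* V\<^sup>* V x = 0\<close> splits as
  \<open>(x - (V\<^sup>*V)\<^sup>\<dagger> V\<^sup>*V x) + (V\<^sup>*V)\<^sup>\<dagger> V\<^sup>*V x\<close> with
  \<open>V\<^sup>*V x \<perp> R(U) + N(V)\<close>.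
\<close>

lemma ctrans_nth [simp]: "ctrans A $ i $ j = cnj (A $ j $ i)"
  by (simp add: ctrans_def)

lemma ctrans_ctrans [simp]: "ctrans (ctrans A) = A"
  by (simp add: vec_eq_iff)

lemma ctrans_mult: "ctrans (A ** B) = ctrans B ** ctrans A"
  by (simp add: vec_eq_iff matrix_matrix_mult_def mult.commute)

lemma cinner_adjoint: "cinner (A *v x) y = cinner x (ctrans A *v y)"
  unfolding cinner_def matrix_vector_mult_def
  by (simp add: sum_distrib_right sum_distrib_left mult_ac) (rule sum.swap)

lemma cinner_adjoint_right: "cinner x (A *v y) = cinner (ctrans A *v x) y"
  using cinner_adjoint[of "ctrans A" x y] by simp

lemma cinner_zero [simp]: "cinner 0 x = 0" "cinner x 0 = 0"
  unfolding cinner_def by simp_all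

lemma cinner_diff_left: "cinner (x - y) z = cinner x z - cinner y z"
  unfolding cinner_def by (simp add: left_diff_distrib sum_subtractf)

lemma cinner_add_right: "cinner z (x + y) = cinner z x + cinner z y"
  unfolding cinner_def by (simp add: distrib_left sum.distrib)

lemma inner_eq_Re_cinner: "inner x y = Re (cinner x y)"
  unfolding inner_vec_def cinner_def inner_complex_def by (simp add: Re_sum)

lemma Re_cinner_self_eq_0: "Re (cinner x x) = 0 \<longleftrightarrow> x = 0"
proof
  assume "Re (cinner x x) = 0"
  hence "(\<Sum>i\<in>UNIV. (cmod (x $ i))\<^sup>2) = 0"
    unfolding cinner_def by (simp add: Re_sum flip: complex_norm_square)
  hence "\<forall>i\<in>UNIV. (cmod (x $ i))\<^sup>2 = 0" by (subst (asm) sum_nonneg_eq_0_iff) auto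
  thus "x = 0" by (simp add: vec_eq_iff)
qed simp

lemma cinner_self_eq_0: "cinner x x = 0 \<longleftrightarrow> x = 0"
  using Re_cinner_self_eq_0[of x] by auto

lemma ctrans_mult_self_mult_vec_eq_0D: "(ctrans A ** A) *v x = 0 \<Longrightarrow> A *v x = 0"
  using cinner_adjoint[of A x "A *v x"] cinner_self_eq_0[of "A *v x"]
  by (simp add: matrix_vector_mul_assoc)

lemma col_space_subsetI: "B = A ** C \<Longrightarrow> col_space B \<subseteq> col_space A"
  unfolding col_space_def by (auto simp: matrix_vector_mul_assoc[symmetric])

lemma null_space_subsetI: "B = C ** A \<Longrightarrow> null_space A \<subseteq> null_space B"
  unfolding null_space_def by (auto simp: matrix_vector_mul_assoc[symmetric])

subsection \<open>Existence and uniqueness of the Moore--Penrose inverse\<close>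

text \<open>The component \<open>t\<close> of \<open>A\<^sup>* v\<close> orthogonal to \<open>R(A\<^sup>*A)\<close> satisfies
  \<open>\<parallel>A t\<parallel>\<^sup>2 = Re \<langle>t, A\<^sup>*A t\<rangle> = 0\<close>, so \<open>t \<perp> A\<^sup>* v\<close> and \<open>t = 0\<close>. The library's
  real inner product on \<open>complex ^ 'n\<close> is the real part of \<open>cinner\<close>, so its orthogonal
  decomposition can be used.\<close>

lemma normal_equations_solvable:
  fixes A :: "complex ^ 'n ^ 'm"
  shows "\<exists>z. (ctrans A ** A) *v z = ctrans A *v v"
proof -
  define S where "S = range (\<lambda>x. (ctrans A ** A) *v x)"
  have "subspace S" unfolding S_def
    by (rule linear_subspace_image[OF matrix_vector_mul_linear subspace_UNIV])
  hence span_S: "span S = S" by (simp add: span_eq_iff)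
  obtain s t where s: "s \<in> span S" and t: "\<And>w. w \<in> span S \<Longrightarrow> orthogonal t w"
    and decomp: "ctrans A *v v = s + t"
    using orthogonal_subspace_decomp_exists[of S "ctrans A *v v"] by blast
  have "(ctrans A ** A) *v t \<in> span S" unfolding S_def by (simp add: span_base)
  hence "inner t ((ctrans A ** A) *v t) = 0" using t by (simp add: orthogonal_def)
  moreover have "inner t ((ctrans A ** A) *v t) = Re (cinner (A *v t) (A *v t))"
    using cinner_adjoint_right[of t "ctrans A" "A *v t"]
    by (simp add: inner_eq_Re_cinner matrix_vector_mul_assoc[symmetric])
  ultimately have "Re (cinner (A *v t) (A *v t)) = 0" by simp
  hence "A *v t = 0" by (simp add: Re_cinner_self_eq_0)
  hence "inner t (ctrans A *v v) = 0"
    using cinner_adjoint_right[of t "ctrans A" v] by (simp add: inner_eq_Re_cinner)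
  moreover have "inner t s = 0" using t[OF s] by (simp add: orthogonal_def)
  ultimately have "t = 0" using decomp by (simp add: inner_add_right)
  thus ?thesis using decomp s span_S unfolding S_def by auto
qed

lemma ex_normal_equations_solution:
  fixes A :: "complex ^ 'n ^ 'm"
  shows "\<exists>Z. ctrans A ** A ** Z = ctrans A"
proof -
  have "\<forall>j. \<exists>z. (ctrans A ** A) *v z = ctrans A *v axis j 1"
    using normal_equations_solvable by blast
  then obtain z where z: "\<And>j. (ctrans A ** A) *v z j = ctrans A *v axis j 1" by metis
  have "ctrans A ** A ** (\<chi> i j. z j $ i) = ctrans A"
  proof (rule vec_eq_iff[THEN iffD2, OF allI], rule vec_eq_iff[THEN iffD2, OF allI])
    fix i j
    have "(ctrans A ** A ** (\<chi> i j. z j $ i)) $ i $ j = ((ctrans A ** A) *v z j) $ i"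
      by (simp add: matrix_matrix_mult_def matrix_vector_mult_def)
    also have "\<dots> = (ctrans A *v axis j 1) $ i" by (simp only: z)
    also have "\<dots> = ctrans A $ i $ j"
      by (simp add: matrix_vector_mult_def axis_def if_distrib cong: if_cong)
    finally show "(ctrans A ** A ** (\<chi> i j. z j $ i)) $ i $ j = ctrans A $ i $ j" .
  qed
  thus ?thesis by blast
qed

lemma normal_equations_projection:
  assumes Z: "ctrans A ** A ** Z = ctrans A"
  shows "ctrans (A ** Z) = A ** Z" and "A ** Z ** A = A"
proof -
  have Z': "ctrans Z ** ctrans A ** A = A"
    using arg_cong[OF Z, of ctrans] by (simp add: ctrans_mult matrix_mul_assoc)
  have "ctrans (A ** Z) ** (A ** Z) = (ctrans Z ** ctrans A ** A) ** Z"
    by (simp add: ctrans_mult matrix_mul_assoc)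
  hence gram: "ctrans (A ** Z) ** (A ** Z) = A ** Z" using Z' by simp
  have "ctrans (A ** Z) = ctrans (ctrans (A ** Z) ** (A ** Z))" using gram by simp
  also have "\<dots> = ctrans (A ** Z) ** (A ** Z)" by (simp only: ctrans_mult ctrans_ctrans)
  finally show hermitian: "ctrans (A ** Z) = A ** Z" using gram by simp
  have "A ** Z ** A = ctrans (A ** Z) ** A" using hermitian by simp
  also have "\<dots> = A" using Z' by (simp add: ctrans_mult)
  finally show "A ** Z ** A = A" .
qed

text \<open>If \<open>A\<^sup>*AZ = A\<^sup>*\<close> and \<open>AA\<^sup>*W = A\<close>, then \<open>W\<^sup>*AZ\<close> is the inverse.\<close>

lemma ex_is_mp_inverse:
  fixes A :: "complex ^ 'n ^ 'm"
  shows "\<exists>X. is_mp_inverse A X"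
proof -
  obtain Z where Z: "ctrans A ** A ** Z = ctrans A" using ex_normal_equations_solution by blast
  obtain W where W: "A ** ctrans A ** W = A" using ex_normal_equations_solution[of "ctrans A"] by auto
  have AZ: "ctrans (A ** Z) = A ** Z" "A ** Z ** A = A" using normal_equations_projection[OF Z] .
  have AW: "ctrans (ctrans A ** W) = ctrans A ** W" "ctrans A ** W ** ctrans A = ctrans A"
    using normal_equations_projection[of "ctrans A" W] W by simp_all
  have WA: "ctrans (ctrans W ** A) = ctrans W ** A" using AW(1) by (simp add: ctrans_mult)
  have AWA: "A ** ctrans W ** A = A"
    using arg_cong[OF AW(2), of ctrans] by (simp add: ctrans_mult matrix_mul_assoc)
  define X where "X = ctrans W ** A ** Z"
  have AX: "A ** X = A ** Z"
    using AWA unfolding X_def by (metis matrix_mul_assoc)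
  have XA: "X ** A = ctrans W ** A"
    using AZ(2) unfolding X_def by (metis matrix_mul_assoc)
  have "is_mp_inverse A X"
    unfolding is_mp_inverse_def
  proof (intro conjI)
    show "A ** X ** A = A" using AX AZ(2) by simp
    show "X ** A ** X = X" using XA AX unfolding X_def by (metis matrix_mul_assoc)
    show "ctrans (A ** X) = A ** X" using AX AZ(1) by simp
    show "ctrans (X ** A) = X ** A" using XA WA by simp
  qed
  thus ?thesis by blast
qed

lemma is_mp_inverse_unique:
  assumes X: "is_mp_inverse A X" and Y: "is_mp_inverse A Y"
  shows "X = Y"
proof -
  have AXA: "A ** X ** A = A" and XAX: "X ** A ** X = X"
    and AX: "ctrans (A ** X) = A ** X" and XA: "ctrans (X ** A) = X ** A"
    using X by (auto simp: is_mp_inverse_def)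
  have AYA: "A ** Y ** A = A" and YAY: "Y ** A ** Y = Y"
    and AY: "ctrans (A ** Y) = A ** Y" and YA: "ctrans (Y ** A) = Y ** A"
    using Y by (auto simp: is_mp_inverse_def)
  have "A ** X = (A ** Y) ** (A ** X)" using AYA by (simp add: matrix_mul_assoc)
  also have "\<dots> = ctrans (A ** Y) ** ctrans (A ** X)" using AX AY by simp
  also have "\<dots> = ctrans (A ** X ** A ** Y)" by (simp add: ctrans_mult matrix_mul_assoc)
  also have "\<dots> = A ** Y" using AXA AY by simp
  finally have AX_AY: "A ** X = A ** Y" .
  have "X ** A = ctrans (X ** (A ** Y ** A))" using AYA XA by simp
  also have "\<dots> = ctrans (Y ** A) ** ctrans (X ** A)" by (simp add: ctrans_mult matrix_mul_assoc)
  also have "\<dots> = Y ** A ** X ** A" using XA YA by (simp add: matrix_mul_assoc)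
  also have "\<dots> = Y ** A" using AXA by (metis matrix_mul_assoc)
  finally have XA_YA: "X ** A = Y ** A" .
  have "X = X ** A ** X" using XAX by simp
  also have "\<dots> = Y ** A ** Y" using XA_YA AX_AY by (metis matrix_mul_assoc)
  finally show ?thesis using YAY by simp
qed

lemma is_mp_inverse_mp_inv: "is_mp_inverse A (mp_inv A)"
  unfolding mp_inv_def using ex_is_mp_inverse[of A] is_mp_inverse_unique[of A] by (metis theI)

lemma mp_inv_penrose:
  "A ** mp_inv A ** A = A" "mp_inv A ** A ** mp_inv A = mp_inv A"
  "ctrans (A ** mp_inv A) = A ** mp_inv A" "ctrans (mp_inv A ** A) = mp_inv A ** A"
  using is_mp_inverse_mp_inv[of A] by (auto simp: is_mp_inverse_def)

lemma mp_inv_ctrans: "mp_inv (ctrans A) = ctrans (mp_inv A)"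
proof -
  have "is_mp_inverse (ctrans A) (ctrans (mp_inv A))"
    unfolding is_mp_inverse_def
  proof (intro conjI)
    show "ctrans A ** ctrans (mp_inv A) ** ctrans A = ctrans A"
      using arg_cong[OF mp_inv_penrose(1)[of A], of ctrans] by (simp add: ctrans_mult matrix_mul_assoc)
    show "ctrans (mp_inv A) ** ctrans A ** ctrans (mp_inv A) = ctrans (mp_inv A)"
      using arg_cong[OF mp_inv_penrose(2)[of A], of ctrans] by (simp add: ctrans_mult matrix_mul_assoc)
    show "ctrans (ctrans A ** ctrans (mp_inv A)) = ctrans A ** ctrans (mp_inv A)"
      using mp_inv_penrose(4)[of A] by (simp add: ctrans_mult)
    show "ctrans (ctrans (mp_inv A) ** ctrans A) = ctrans (mp_inv A) ** ctrans A"
      using mp_inv_penrose(3)[of A] by (simp add: ctrans_mult)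
  qed
  thus ?thesis using is_mp_inverse_unique is_mp_inverse_mp_inv by blast
qed

lemma mp_inv_commute_if_hermitian:
  assumes "ctrans P = P"
  shows "P ** mp_inv P = mp_inv P ** P"
proof -
  have "mp_inv P ** P = ctrans (mp_inv P ** P)" by (simp add: mp_inv_penrose(4))
  also have "\<dots> = P ** ctrans (mp_inv P)" by (simp add: assms ctrans_mult)
  also have "ctrans (mp_inv P) = mp_inv P" using mp_inv_ctrans[of P] assms by simp
  finally show ?thesis by simp
qed

lemma mp_inv_factor_left: "mp_inv A = ctrans A ** ctrans (mp_inv A) ** mp_inv A"
proof -
  have "mp_inv A = (mp_inv A ** A) ** mp_inv A" by (simp add: mp_inv_penrose(2))
  also have "\<dots> = ctrans (mp_inv A ** A) ** mp_inv A" by (simp add: mp_inv_penrose(4))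
  finally show ?thesis by (simp add: ctrans_mult)
qed

lemma mp_inv_factor_right: "mp_inv A = mp_inv A ** ctrans (mp_inv A) ** ctrans A"
proof -
  have "mp_inv A = mp_inv A ** (A ** mp_inv A)"
    using mp_inv_penrose(2)[of A] by (simp add: matrix_mul_assoc)
  also have "\<dots> = mp_inv A ** ctrans (A ** mp_inv A)" by (simp add: mp_inv_penrose(3))
  finally show ?thesis by (simp add: ctrans_mult matrix_mul_assoc)
qed

lemma ctrans_factor_left: "ctrans A = mp_inv A ** A ** ctrans A"
proof -
  have "ctrans A = ctrans (A ** (mp_inv A ** A))"
    using mp_inv_penrose(1)[of A] by (simp add: matrix_mul_assoc)
  also have "\<dots> = ctrans (mp_inv A ** A) ** ctrans A" by (simp add: ctrans_mult)
  finally show ?thesis by (simp add: mp_inv_penrose(4))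
qed

lemma ctrans_factor_right: "ctrans A = ctrans A ** A ** mp_inv A"
proof -
  have "ctrans A = ctrans ((A ** mp_inv A) ** A)" by (simp add: mp_inv_penrose(1))
  also have "\<dots> = ctrans A ** ctrans (A ** mp_inv A)" by (simp add: ctrans_mult)
  finally show ?thesis by (simp add: mp_inv_penrose(3) matrix_mul_assoc)
qed

subsection \<open>Ranges, null spaces and orthogonality\<close>

lemma col_space_if_orthogonal_null_space_ctrans:
  fixes B :: "complex ^ 'n ^ 'm"
  assumes "\<And>n. ctrans B *v n = 0 \<Longrightarrow> cinner x n = 0"
  shows "x \<in> col_space B"
proof -
  define d where "d = x - B *v (mp_inv B *v x)"
  have "ctrans B *v d = ctrans B *v x - (ctrans (B ** mp_inv B ** B)) *v x"
    unfolding d_def using mp_inv_penrose(3)[of B]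
    by (simp add: matrix_vector_mult_diff_distrib matrix_vector_mul_assoc ctrans_mult
        matrix_mul_assoc)
  hence Bd: "ctrans B *v d = 0" by (simp add: mp_inv_penrose(1))
  have "cinner d d = cinner x d - cinner (B *v (mp_inv B *v x)) d"
    unfolding d_def by (rule cinner_diff_left)
  also have "\<dots> = 0" using assms Bd by (simp add: cinner_adjoint)
  finally have "d = 0" by (simp add: cinner_self_eq_0)
  thus ?thesis unfolding d_def col_space_def by auto
qed

lemma mult_ctrans_cancel_right:
  fixes A :: "complex ^ 'k ^ 'n" and B C :: "complex ^ 'n ^ 'm"
  assumes "B ** A ** ctrans A = C ** A ** ctrans A"
  shows "B ** A = C ** A"
proof -
  have eq: "A ** ctrans A ** ctrans B = A ** ctrans A ** ctrans C"
    using arg_cong[OF assms, of ctrans] by (simp add: ctrans_mult matrix_mul_assoc)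
  have "ctrans A *v (ctrans B *v y - ctrans C *v y) = 0" for y
    by (rule ctrans_mult_self_mult_vec_eq_0D)
      (simp add: eq matrix_vector_mult_diff_distrib matrix_vector_mul_assoc)
  hence "ctrans A ** ctrans B = ctrans A ** ctrans C"
    by (simp add: matrix_eq matrix_vector_mul_assoc matrix_vector_mult_diff_distrib)
  thus ?thesis by (metis ctrans_ctrans ctrans_mult)
qed

lemma col_space_mult_ctrans_self:
  fixes A :: "complex ^ 'm ^ 'k" and V :: "complex ^ 'm ^ 'q"
  shows "col_space (A ** ctrans V ** V) = col_space (A ** ctrans V)"
proof
  show "col_space (A ** ctrans V ** V) \<subseteq> col_space (A ** ctrans V)"
    by (rule col_space_subsetI) simp
  have "A ** ctrans V = A ** (ctrans V ** V ** mp_inv V)" by (simp flip: ctrans_factor_right)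
  also have "\<dots> = (A ** ctrans V ** V) ** mp_inv V" by (simp add: matrix_mul_assoc)
  finally show "col_space (A ** ctrans V) \<subseteq> col_space (A ** ctrans V ** V)"
    by (rule col_space_subsetI)
qed

lemma null_space_mult_self_ctrans:
  fixes A :: "complex ^ 'k ^ 'm" and B :: "complex ^ 'n ^ 'm"
  shows "null_space (A ** ctrans A ** B) = null_space (ctrans A ** B)"
proof
  show "null_space (ctrans A ** B) \<subseteq> null_space (A ** ctrans A ** B)"
    by (rule null_space_subsetI) (simp add: matrix_mul_assoc)
  show "null_space (A ** ctrans A ** B) \<subseteq> null_space (ctrans A ** B)"
  proof
    fix x assume "x \<in> null_space (A ** ctrans A ** B)"
    hence "(ctrans (ctrans A) ** ctrans A) *v (B *v x) = 0"
      by (simp add: null_space_def matrix_vector_mul_assoc)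
    hence "ctrans A *v (B *v x) = 0" by (rule ctrans_mult_self_mult_vec_eq_0D)
    thus "x \<in> null_space (ctrans A ** B)" by (simp add: null_space_def matrix_vector_mul_assoc)
  qed
qed

subsection \<open>The oblique projector \<open>U (VU)\<^sup>\<dagger> V\<close>\<close>

lemma idempotent_mult_mp_inv_mult:
  "(U ** mp_inv (V ** U) ** V) ** (U ** mp_inv (V ** U) ** V) = U ** mp_inv (V ** U) ** V"
proof -
  have "(U ** mp_inv (V ** U) ** V) ** (U ** mp_inv (V ** U) ** V)
      = U ** (mp_inv (V ** U) ** (V ** U) ** mp_inv (V ** U)) ** V"
    by (simp add: matrix_mul_assoc)
  thus ?thesis by (simp add: mp_inv_penrose(2))
qed

lemma col_space_mult_mp_inv_mult:
  "col_space (U ** mp_inv (V ** U) ** V) = col_space (U ** ctrans U ** ctrans V)"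
proof
  let ?W = "V ** U"
  have "U ** mp_inv ?W ** V = U ** (ctrans ?W ** ctrans (mp_inv ?W) ** mp_inv ?W) ** V"
    by (simp flip: mp_inv_factor_left)
  also have "\<dots> = (U ** ctrans U ** ctrans V) ** (ctrans (mp_inv ?W) ** mp_inv ?W ** V)"
    by (simp add: ctrans_mult matrix_mul_assoc)
  finally show "col_space (U ** mp_inv ?W ** V) \<subseteq> col_space (U ** ctrans U ** ctrans V)"
    by (rule col_space_subsetI)
  have "U ** ctrans U ** ctrans V = U ** ctrans ?W" by (simp add: ctrans_mult matrix_mul_assoc)
  also have "\<dots> = U ** (mp_inv ?W ** ?W ** ctrans ?W)" by (simp flip: ctrans_factor_left)
  also have "\<dots> = (U ** mp_inv ?W ** V) ** (U ** ctrans ?W)" by (simp add: matrix_mul_assoc)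
  finally show "col_space (U ** ctrans U ** ctrans V) \<subseteq> col_space (U ** mp_inv ?W ** V)"
    by (rule col_space_subsetI)
qed

lemma null_space_mult_mp_inv_mult:
  "null_space (U ** mp_inv (V ** U) ** V) = null_space (ctrans U ** ctrans V ** V)"
proof
  let ?W = "V ** U"
  have "U ** mp_inv ?W ** V = U ** (mp_inv ?W ** ctrans (mp_inv ?W) ** ctrans ?W) ** V"
    by (simp flip: mp_inv_factor_right)
  also have "\<dots> = (U ** mp_inv ?W ** ctrans (mp_inv ?W)) ** (ctrans U ** ctrans V ** V)"
    by (simp add: ctrans_mult matrix_mul_assoc)
  finally show "null_space (ctrans U ** ctrans V ** V) \<subseteq> null_space (U ** mp_inv ?W ** V)"
    by (rule null_space_subsetI)
  have "ctrans U ** ctrans V ** V = ctrans ?W ** V" by (simp add: ctrans_mult)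
  also have "\<dots> = (ctrans ?W ** ?W ** mp_inv ?W) ** V" by (simp flip: ctrans_factor_right)
  also have "\<dots> = (ctrans ?W ** V) ** (U ** mp_inv ?W ** V)" by (simp add: matrix_mul_assoc)
  finally show "null_space (U ** mp_inv ?W ** V) \<subseteq> null_space (ctrans U ** ctrans V ** V)"
    by (rule null_space_subsetI)
qed

lemma mult_mp_inv_gram_col_space:
  fixes U :: "complex ^ 'p ^ 'm"
  assumes "x \<in> col_space U"
  shows "(U ** ctrans U ** mp_inv (U ** ctrans U)) *v x = x"
proof -
  let ?P = "U ** ctrans U"
  have "?P ** mp_inv ?P ** U = mat 1 ** U"
    by (rule mult_ctrans_cancel_right)
      (use mp_inv_penrose(1)[of ?P] in \<open>simp add: matrix_mul_assoc\<close>)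
  moreover obtain w where "x = U *v w" using assms by (auto simp: col_space_def)
  ultimately show ?thesis by (simp add: matrix_vector_mul_assoc)
qed

lemma col_space_gram_mult_ctrans_subset_cperp:
  fixes U :: "complex ^ 'p ^ 'm" and V :: "complex ^ 'm ^ 'q"
  shows "col_space (U ** ctrans U ** ctrans V)
           \<subseteq> cperp ((\<lambda>x. mp_inv (U ** ctrans U) *v x) ` (col_space U \<inter> null_space V))"
proof
  let ?P = "U ** ctrans U"
  fix x assume "x \<in> col_space (?P ** ctrans V)"
  then obtain y where x: "x = ?P *v (ctrans V *v y)"
    by (auto simp: col_space_def matrix_vector_mul_assoc)
  have "cinner x (mp_inv ?P *v z) = 0" if "z \<in> col_space U" "z \<in> null_space V" for z
  proof -
    have "cinner x (mp_inv ?P *v z) = cinner (ctrans V *v y) ((?P ** mp_inv ?P) *v z)"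
      unfolding x by (subst cinner_adjoint) (simp add: ctrans_mult matrix_vector_mul_assoc)
    also have "\<dots> = cinner (ctrans V *v y) z" using mult_mp_inv_gram_col_space[OF that(1)] by simp
    also have "\<dots> = cinner y (V *v z)" using cinner_adjoint[of "ctrans V" y z] by simp
    finally show ?thesis using that(2) by (simp add: null_space_def)
  qed
  thus "x \<in> cperp ((\<lambda>x. mp_inv ?P *v x) ` (col_space U \<inter> null_space V))"
    by (auto simp: cperp_def)
qed

lemma inter_cperp_subset_col_space_gram_mult_ctrans:
  fixes U :: "complex ^ 'p ^ 'm" and V :: "complex ^ 'm ^ 'q"
  shows "col_space U \<inter> cperp ((\<lambda>x. mp_inv (U ** ctrans U) *v x) ` (col_space U \<inter> null_space V))
           \<subseteq> col_space (U ** ctrans U ** ctrans V)"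
proof
  let ?P = "U ** ctrans U"
  fix x assume x: "x \<in> col_space U \<inter> cperp ((\<lambda>x. mp_inv ?P *v x) ` (col_space U \<inter> null_space V))"
  show "x \<in> col_space (?P ** ctrans V)"
  proof (rule col_space_if_orthogonal_null_space_ctrans)
    fix n assume "ctrans (?P ** ctrans V) *v n = 0"
    hence "V *v (?P *v n) = 0" by (simp add: ctrans_mult matrix_vector_mul_assoc)
    hence "?P *v n \<in> col_space U \<inter> null_space V"
      by (auto simp: col_space_def null_space_def matrix_vector_mul_assoc[symmetric])
    hence "mp_inv ?P *v (?P *v n) \<in> (\<lambda>x. mp_inv ?P *v x) ` (col_space U \<inter> null_space V)"
      by (rule imageI)
    hence orth: "cinner x (mp_inv ?P *v (?P *v n)) = 0" using x unfolding cperp_def by blast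
    have "cinner x n = cinner ((?P ** mp_inv ?P) *v x) n"
      using mult_mp_inv_gram_col_space[of x U] x by simp
    also have "\<dots> = cinner x ((?P ** mp_inv ?P) *v n)"
      by (simp only: cinner_adjoint mp_inv_penrose(3))
    also have "\<dots> = cinner x (mp_inv ?P *v (?P *v n))"
      using mp_inv_commute_if_hermitian[of ?P]
      by (simp only: ctrans_mult ctrans_ctrans matrix_vector_mul_assoc)
    finally show "cinner x n = 0" using orth by simp
  qed
qed

lemma col_space_gram_mult_ctrans:
  fixes U :: "complex ^ 'p ^ 'm" and V :: "complex ^ 'm ^ 'q"
  shows "col_space (U ** ctrans U ** ctrans V) =
           col_space U \<inter> cperp ((\<lambda>x. mp_inv (U ** ctrans U) *v x) ` (col_space U \<inter> null_space V))"
proof -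
  have "col_space (U ** ctrans U ** ctrans V) \<subseteq> col_space U"
    by (rule col_space_subsetI[where C = "ctrans U ** ctrans V"]) (simp add: matrix_mul_assoc)
  thus ?thesis
    using col_space_gram_mult_ctrans_subset_cperp inter_cperp_subset_col_space_gram_mult_ctrans
    by blast
qed

lemma cperp_subspace_sum_col_space_null_space:
  "s \<in> cperp (subspace_sum (col_space U) (null_space V))
     \<longleftrightarrow> ctrans U *v s = 0 \<and> s \<in> cperp (null_space V)"
proof
  assume s: "s \<in> cperp (subspace_sum (col_space U) (null_space V))"
  have "U *v w + 0 \<in> subspace_sum (col_space U) (null_space V)" for w
    unfolding subspace_sum_def col_space_def null_space_def
    by (rule CollectI, rule exI[of _ "U *v w"], rule exI[of _ 0]) simp
  hence "cinner s (U *v (ctrans U *v s)) = 0" using s by (auto simp: cperp_def)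
  hence "ctrans U *v s = 0"
    using cinner_adjoint_right[of s U "ctrans U *v s"] by (simp add: cinner_self_eq_0)
  moreover have "U *v 0 + n \<in> subspace_sum (col_space U) (null_space V)" if "n \<in> null_space V" for n
    unfolding subspace_sum_def col_space_def using that by blast
  ultimately show "ctrans U *v s = 0 \<and> s \<in> cperp (null_space V)"
    using s by (auto simp: cperp_def)
next
  assume "ctrans U *v s = 0 \<and> s \<in> cperp (null_space V)"
  thus "s \<in> cperp (subspace_sum (col_space U) (null_space V))"
    by (auto simp: cperp_def subspace_sum_def col_space_def cinner_add_right cinner_adjoint_right)
qed

lemma cperp_null_space_subset_col_space_gram:
  "cperp (null_space V) \<subseteq> col_space (ctrans V ** V)"
proof
  fix s assume s: "s \<in> cperp (null_space V)"
  show "s \<in> col_space (ctrans V ** V)"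
  proof (rule col_space_if_orthogonal_null_space_ctrans)
    fix n assume "ctrans (ctrans V ** V) *v n = 0"
    hence "(ctrans V ** V) *v n = 0" by (simp add: ctrans_mult)
    hence "V *v n = 0" by (rule ctrans_mult_self_mult_vec_eq_0D)
    thus "cinner s n = 0" using s by (simp add: cperp_def null_space_def)
  qed
qed

lemma null_space_inter_mp_inv_gram_image:
  "null_space V \<inter> (\<lambda>x. mp_inv (ctrans V ** V) *v x) ` col_space (ctrans V ** V) = {0}"
proof -
  let ?G = "ctrans V ** V"
  show ?thesis
  proof
    show "null_space V \<inter> (\<lambda>x. mp_inv ?G *v x) ` col_space ?G \<subseteq> {0}"
    proof
      fix x assume "x \<in> null_space V \<inter> (\<lambda>x. mp_inv ?G *v x) ` col_space ?G"
      then obtain t where Vx: "V *v x = 0" and x: "x = (mp_inv ?G ** ?G) *v t"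
        by (auto simp: null_space_def col_space_def matrix_vector_mul_assoc)
      have "cinner x x = cinner t ((mp_inv ?G ** ?G) *v x)"
        using x mp_inv_penrose(4)[of ?G] by (simp add: cinner_adjoint)
      also have "\<dots> = 0" using Vx by (simp add: matrix_vector_mul_assoc[symmetric])
      finally show "x \<in> {0}" by (simp add: cinner_self_eq_0)
    qed
    have "0 = mp_inv ?G *v (?G *v 0)" by simp
    hence "0 \<in> (\<lambda>x. mp_inv ?G *v x) ` col_space ?G" unfolding col_space_def by blast
    thus "{0} \<subseteq> null_space V \<inter> (\<lambda>x. mp_inv ?G *v x) ` col_space ?G"
      by (simp add: null_space_def)
  qed
qed

lemma null_space_ctrans_mult_gram_eq_subspace_sum:
  fixes U :: "complex ^ 'p ^ 'm" and V :: "complex ^ 'm ^ 'q"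
  shows "null_space (ctrans U ** ctrans V ** V) =
           subspace_sum (null_space V)
             ((\<lambda>x. mp_inv (ctrans V ** V) *v x) ` cperp (subspace_sum (col_space U) (null_space V)))"
proof
  let ?G = "ctrans V ** V" and ?S = "cperp (subspace_sum (col_space U) (null_space V))"
  have G_null: "?G *v x = 0 \<longleftrightarrow> V *v x = 0" for x
    using ctrans_mult_self_mult_vec_eq_0D[of V x] by (auto simp: matrix_vector_mul_assoc[symmetric])
  have UG: "(ctrans U ** ctrans V ** V) *v x = ctrans U *v (?G *v x)" for x
    by (simp add: matrix_vector_mul_assoc matrix_mul_assoc)
  show "null_space (ctrans U ** ctrans V ** V)
      \<subseteq> subspace_sum (null_space V) ((\<lambda>x. mp_inv ?G *v x) ` ?S)"
  proof
    fix x assume "x \<in> null_space (ctrans U ** ctrans V ** V)"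
    hence "ctrans U *v (?G *v x) = 0" by (simp add: null_space_def UG)
    moreover have "?G *v x \<in> cperp (null_space V)"
      using cinner_adjoint[of "ctrans V" "V *v x"]
      by (simp add: cperp_def null_space_def matrix_vector_mul_assoc[symmetric])
    ultimately have "?G *v x \<in> ?S" by (simp add: cperp_subspace_sum_col_space_null_space)
    moreover have "?G *v (x - mp_inv ?G *v (?G *v x)) = 0"
      using mp_inv_penrose(1)[of ?G]
      by (simp add: matrix_vector_mult_diff_distrib matrix_vector_mul_assoc matrix_mul_assoc)
    hence "x - mp_inv ?G *v (?G *v x) \<in> null_space V" by (simp add: null_space_def G_null)
    moreover have "x = (x - mp_inv ?G *v (?G *v x)) + mp_inv ?G *v (?G *v x)" by simp
    ultimately show "x \<in> subspace_sum (null_space V) ((\<lambda>x. mp_inv ?G *v x) ` ?S)"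
      unfolding subspace_sum_def by blast
  qed
  show "subspace_sum (null_space V) ((\<lambda>x. mp_inv ?G *v x) ` ?S)
      \<subseteq> null_space (ctrans U ** ctrans V ** V)"
  proof
    fix x assume "x \<in> subspace_sum (null_space V) ((\<lambda>x. mp_inv ?G *v x) ` ?S)"
    then obtain n s where x: "x = n + mp_inv ?G *v s" and n: "V *v n = 0" and s: "s \<in> ?S"
      unfolding subspace_sum_def null_space_def by auto
    have "s \<in> col_space ?G"
      using s cperp_null_space_subset_col_space_gram[of V]
      by (auto simp: cperp_subspace_sum_col_space_null_space)
    then obtain t where t: "s = ?G *v t" by (auto simp: col_space_def)
    have "?G *v n = 0" using n G_null by simp
    hence "?G *v x = (?G ** mp_inv ?G ** ?G) *v t"
      by (simp add: x t matrix_vector_right_distrib matrix_vector_mul_assoc matrix_mul_assoc)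
    hence "?G *v x = s" by (simp only: t mp_inv_penrose(1))
    moreover have "ctrans U *v s = 0" using s by (simp add: cperp_subspace_sum_col_space_null_space)
    ultimately show "x \<in> null_space (ctrans U ** ctrans V ** V)" by (simp add: null_space_def UG)
  qed
qed

lemma is_direct_sum_null_space_ctrans_mult_gram:
  fixes U :: "complex ^ 'p ^ 'm" and V :: "complex ^ 'm ^ 'q"
  shows "is_direct_sum (null_space (ctrans U ** ctrans V ** V)) (null_space V)
           ((\<lambda>x. mp_inv (ctrans V ** V) *v x) ` cperp (subspace_sum (col_space U) (null_space V)))"
proof -
  let ?S = "cperp (subspace_sum (col_space U) (null_space V))"
  have "?S \<subseteq> col_space (ctrans V ** V)"
    using cperp_null_space_subset_col_space_gram[of V]
    by (auto simp: cperp_subspace_sum_col_space_null_space)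
  hence "null_space V \<inter> (\<lambda>x. mp_inv (ctrans V ** V) *v x) ` ?S \<subseteq> {0}"
    using null_space_inter_mp_inv_gram_image[of V] by blast
  moreover have "0 \<in> ?S" by (simp add: cperp_def)
  hence "0 \<in> null_space V \<inter> (\<lambda>x. mp_inv (ctrans V ** V) *v x) ` ?S"
    by (force simp: null_space_def)
  ultimately show ?thesis
    unfolding is_direct_sum_def using null_space_ctrans_mult_gram_eq_subspace_sum by blast
qed

theorem theorem2:
  fixes U :: "complex ^ 'p ^ 'm" and V :: "complex ^ 'm ^ 'q"
  defines "E \<equiv> U ** mp_inv (V ** U) ** V"
  shows "E ** E = E
    \<and> col_space E = col_space (U ** ctrans U ** ctrans V)
    \<and> col_space (U ** ctrans U ** ctrans V) = col_space (U ** ctrans U ** ctrans V ** V)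
    \<and> col_space (U ** ctrans U ** ctrans V ** V) =
           col_space U \<inter> cperp ((\<lambda>x. mp_inv (U ** ctrans U) *v x) ` (col_space U \<inter> null_space V))
    \<and> null_space E = null_space (ctrans U ** ctrans V ** V)
    \<and> null_space (ctrans U ** ctrans V ** V) = null_space (U ** ctrans U ** ctrans V ** V)
    \<and> is_direct_sum (null_space (U ** ctrans U ** ctrans V ** V)) (null_space V)
           ((\<lambda>x. mp_inv (ctrans V ** V) *v x) ` cperp (subspace_sum (col_space U) (null_space V)))"
proof -
  have null: "null_space (U ** ctrans U ** ctrans V ** V) = null_space (ctrans U ** ctrans V ** V)"
    using null_space_mult_self_ctrans[of U "ctrans V ** V"] by (simp add: matrix_mul_assoc)
  have col: "col_space (U ** ctrans U ** ctrans V ** V) = col_space (U ** ctrans U ** ctrans V)"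
    by (rule col_space_mult_ctrans_self)
  show ?thesis
    unfolding E_def null col
    by (intro conjI refl idempotent_mult_mp_inv_mult col_space_mult_mp_inv_mult
        col_space_gram_mult_ctrans null_space_mult_mp_inv_mult
        is_direct_sum_null_space_ctrans_mult_gram)
qed

end
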